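(* In the Poisson mining model of the context, call a block a lagger if no other block is mined during $(t_j-\Delta,t_j]$ where $t_j$ is its mining time, and a tailgater otherwise. Relabel every tailgater mined by an honest node as adversarial, so that the honest blocks are exactly the laggers mined by honest nodes. Then (i) the blocks are independently honest with probability $p=\rho e^{-\lambda\Delta}$ and adversarial with probability $1-p$; and (ii) every honest block is received by all honest nodes before the next honest block is mined, so that all honest blocks lie at distinct heights and every honest block mined after any time $\tau$ is higher than every honest block mined by time $\tau$.
   Context: Blocks are mined according to a homogeneous Poisson process of rate $\lambda>0$; independently, each block is mined by an honest node with probability $\rho$ and by the adversary otherwise. Block $j$ is mined at time $t_j$. An honest block mined at time $t$ extends a longest chain in its miner's view just before $t$ and is published immediately; if an honest node mines or receives a new longest chain at time $t$, all honest nodes receive it by time $t+\Delta$, with $\Delta\ge0$. *)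

theory Defs
  imports "HOL-Probability.Probability"
begin

text \<open>Block 0 is the genesis block, mined at time 0; block j (j \<ge> 1) is mined at
  time X 1 + ... + X j, where X k is the k-th inter-arrival time of the Poisson process.\<close>
definition mine_time :: "(nat \<Rightarrow> real) \<Rightarrow> nat \<Rightarrow> real" where
  "mine_time X j = (\<Sum>k\<in>{1..j}. X k)"

definition lagger :: "(nat \<Rightarrow> real) \<Rightarrow> real \<Rightarrow> nat \<Rightarrow> bool" where
  "lagger t \<Delta> j \<longleftrightarrow> (\<forall>i. i \<noteq> j \<longrightarrow> \<not> (t j - \<Delta> < t i \<and> t i \<le> t j))"

definition relabeled_honest :: "(nat \<Rightarrow> real) \<Rightarrow> (nat \<Rightarrow> bool) \<Rightarrow> real \<Rightarrow> nat \<Rightarrow> bool" where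
  "relabeled_honest t B \<Delta> j \<longleftrightarrow> B j \<and> lagger t \<Delta> j"

text \<open>An execution consistent with the protocol rules, given mining times t and the
  marks B (B j: block j is mined by an honest node).
  Hon: set of honest nodes; miner j: the honest node that mined block j (if B j);
  parent j: the block extended by block j; ht j: height (chain length) of block j;
  rcv n b: time at which node n receives (or, for its own blocks, mines) block b,
  \<infinity> if never.  The view of node n at time s is the set of b with rcv n b \<le> s; the view
  just before time s is the set of b with rcv n b < s.  A chain is identified with its tip.\<close>
definition valid_execution ::
  "(nat \<Rightarrow> real) \<Rightarrow> (nat \<Rightarrow> bool) \<Rightarrow> real \<Rightarrow> 'n set \<Rightarrow> (nat \<Rightarrow> 'n) \<Rightarrow> (nat \<Rightarrow> nat)
    \<Rightarrow> (nat \<Rightarrow> nat) \<Rightarrow> ('n \<Rightarrow> nat \<Rightarrow> ereal) \<Rightarrow> bool" where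
  "valid_execution t B \<Delta> Hon miner parent ht rcv \<longleftrightarrow>
     ht 0 = 0 \<and>
     (\<forall>j\<ge>1. parent j < j \<and> ht j = ht (parent j) + 1) \<and>
     (\<forall>n\<in>Hon. rcv n 0 \<le> 0) \<and>
     (\<forall>n\<in>Hon. \<forall>b. ereal (t b) \<le> rcv n b) \<and>
     (\<forall>n\<in>Hon. \<forall>b\<ge>1. rcv n (parent b) \<le> rcv n b) \<and>
     (\<forall>j\<ge>1. B j \<longrightarrow>
        miner j \<in> Hon \<and>
        rcv (miner j) j = ereal (t j) \<and>
        rcv (miner j) (parent j) < ereal (t j) \<and>
        (\<forall>b. rcv (miner j) b < ereal (t j) \<longrightarrow> ht b \<le> ht (parent j)) \<and>
        (\<forall>n\<in>Hon. rcv n j \<le> ereal (t j + \<Delta>))) \<and>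
     (\<forall>n\<in>Hon. \<forall>b s. rcv n b = ereal s \<and> (\<forall>b'. rcv n b' \<le> ereal s \<longrightarrow> ht b' \<le> ht b)
        \<longrightarrow> (\<forall>n'\<in>Hon. rcv n' b \<le> ereal (s + \<Delta>)))"

end

theory Submission
  imports Defs
begin

text \<open>Because the lagger condition only looks backwards in time, whether block j is a lagger
  depends on its own inter-arrival time alone: it is the event that X j exceeds \<Delta>. So the
  relabelled honest blocks are (almost surely) the blocks j with B j and \<Delta> < X j; these events
  are independent across j, with probability \<rho> e^{-\<lambda>\<Delta>}. Deterministically, an honest block j is
  mined more than \<Delta> after every earlier block i, and an honest i has reached all honest nodes by
  t i + \<Delta>. So the miner of j sees i, and j is built strictly above it.\<close>

lemma mine_time_Suc: "mine_time X (Suc j) = mine_time X j + X (Suc j)"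
  by (simp add: mine_time_def sum.cl_ivl_Suc)

lemma strict_mono_mine_time:
  assumes "\<forall>k\<ge>1. 0 < X k"
  shows "strict_mono (mine_time X)"
  using assms by (simp add: strict_mono_Suc_iff mine_time_Suc)

lemma lagger_mine_time_iff:
  assumes pos: "\<forall>k\<ge>1. 0 < X k" and "1 \<le> j"
  shows "lagger (mine_time X) \<Delta> j \<longleftrightarrow> \<Delta> \<le> X j"
proof -
  let ?t = "mine_time X"
  obtain m where "j = Suc m" using \<open>1 \<le> j\<close> by (cases j) auto
  have mono: "strict_mono ?t" using pos by (rule strict_mono_mine_time)
  have tj: "?t j = ?t m + X j" using \<open>j = Suc m\<close> by (simp add: mine_time_Suc)
  show ?thesis
  proof
    assume "lagger ?t \<Delta> j"
    moreover have "?t m \<le> ?t j" using mono \<open>j = Suc m\<close> by (simp add: strict_mono_less_eq)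
    ultimately have "\<not> ?t j - \<Delta> < ?t m"
      using \<open>j = Suc m\<close> unfolding lagger_def by (metis n_not_Suc_n)
    then show "\<Delta> \<le> X j" using tj by simp
  next
    assume "\<Delta> \<le> X j"
    show "lagger ?t \<Delta> j"
      unfolding lagger_def
    proof (intro allI impI)
      fix i assume "i \<noteq> j"
      then consider "i \<le> m" | "j < i" using \<open>j = Suc m\<close> by linarith
      then show "\<not> (?t j - \<Delta> < ?t i \<and> ?t i \<le> ?t j)"
      proof cases
        case 1
        then have "?t i \<le> ?t m" using mono by (simp add: strict_mono_less_eq)
        then show ?thesis using tj \<open>\<Delta> \<le> X j\<close> by linarith
      next
        case 2
        then have "?t j < ?t i" using mono by (simp add: strict_mono_less)
        then show ?thesis by simp
      qed
    qed
  qed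
qed

text \<open>The hypothesis X j \<noteq> \<Delta> (true almost surely) makes the gap after t i + \<Delta> strict, as
  needed: the miner of j extends a longest chain among blocks received strictly before t j.\<close>

lemma honest_received_before_later_honest:
  assumes pos: "\<forall>k\<ge>1. 0 < X k" and ne: "X j \<noteq> \<Delta>"
    and V: "valid_execution (mine_time X) B \<Delta> Hon miner parent ht rcv"
    and "1 \<le> i" "i < j"
    and Hi: "relabeled_honest (mine_time X) B \<Delta> i" and Hj: "relabeled_honest (mine_time X) B \<Delta> j"
    and "n \<in> Hon"
  shows "rcv n i < ereal (mine_time X j)"
proof -
  let ?t = "mine_time X"
  obtain m where m: "j = Suc m" "i \<le> m" using \<open>i < j\<close> by (cases j) auto
  have "\<Delta> < X j"
    using Hj ne lagger_mine_time_iff[OF pos, of j] m(1) by (auto simp: relabeled_honest_def)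
  moreover have "?t i \<le> ?t m"
    using strict_mono_mine_time[OF pos] m(2) by (simp add: strict_mono_less_eq)
  ultimately have "ereal (?t i + \<Delta>) < ereal (?t j)" using m(1) by (simp add: mine_time_Suc)
  moreover have "rcv n i \<le> ereal (?t i + \<Delta>)"
    using V Hi \<open>1 \<le> i\<close> \<open>n \<in> Hon\<close> unfolding valid_execution_def relabeled_honest_def by auto
  ultimately show ?thesis by (rule order.strict_trans1[rotated])
qed

lemma honest_height_less_later_honest:
  assumes "\<forall>k\<ge>1. 0 < X k" and "X j \<noteq> \<Delta>"
    and V: "valid_execution (mine_time X) B \<Delta> Hon miner parent ht rcv"
    and "1 \<le> i" "i < j"
    and "relabeled_honest (mine_time X) B \<Delta> i" and Hj: "relabeled_honest (mine_time X) B \<Delta> j"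
  shows "ht i < ht j"
proof -
  have "miner j \<in> Hon"
    and "\<forall>b. rcv (miner j) b < ereal (mine_time X j) \<longrightarrow> ht b \<le> ht (parent j)"
    and "ht j = ht (parent j) + 1"
    using V Hj \<open>i < j\<close> unfolding valid_execution_def relabeled_honest_def by auto
  moreover have "rcv (miner j) i < ereal (mine_time X j)"
    using honest_received_before_later_honest[OF assms] \<open>miner j \<in> Hon\<close> .
  ultimately show ?thesis by fastforce
qed

lemma valid_execution_honest_blocks:
  assumes good: "\<forall>k\<ge>1. 0 < X k \<and> X k \<noteq> \<Delta>"
    and V: "valid_execution (mine_time X) B \<Delta> Hon miner parent ht rcv"
  shows "let t = mine_time X; H = relabeled_honest t B \<Delta> in
              (\<forall>i j. 1 \<le> i \<longrightarrow> i < j \<longrightarrow> H i \<longrightarrow> H j \<longrightarrow> (\<forall>n\<in>Hon. rcv n i < ereal (t j)))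
            \<and> (\<forall>i j. 1 \<le> i \<longrightarrow> 1 \<le> j \<longrightarrow> i \<noteq> j \<longrightarrow> H i \<longrightarrow> H j \<longrightarrow> ht i \<noteq> ht j)
            \<and> (\<forall>\<tau> i j. 1 \<le> i \<longrightarrow> 1 \<le> j \<longrightarrow> H i \<longrightarrow> H j \<longrightarrow> t i \<le> \<tau> \<longrightarrow> \<tau> < t j
                   \<longrightarrow> ht i < ht j)"
proof -
  let ?H = "relabeled_honest (mine_time X) B \<Delta>"
  have pos: "\<forall>k\<ge>1. 0 < X k" using good by simp
  have less: "ht i < ht j" if "1 \<le> i" "i < j" "?H i" "?H j" for i j
    using honest_height_less_later_honest[OF pos _ V that] good that by simp
  have order: "i < j" if "mine_time X i < mine_time X j" for i j
    using strict_mono_mine_time[OF pos] that by (simp add: strict_mono_less)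
  have "\<forall>n\<in>Hon. rcv n i < ereal (mine_time X j)" if "1 \<le> i" "i < j" "?H i" "?H j" for i j
    using honest_received_before_later_honest[OF pos _ V that] good that by simp
  moreover have "ht i \<noteq> ht j" if "1 \<le> i" "1 \<le> j" "i \<noteq> j" "?H i" "?H j" for i j
    using less[of i j] less[of j i] that by (cases "i < j") auto
  moreover have "ht i < ht j"
    if "1 \<le> i" "?H i" "?H j" "mine_time X i \<le> \<tau>" "\<tau> < mine_time X j" for \<tau> i j
    using less[of i j] order[of i j] that by simp
  ultimately show ?thesis
    unfolding Let_def by blast
qed

lemma (in prob_space) indep_sets_AE_cong:
  assumes indep: "indep_sets F I"
    and events: "\<And>i. i \<in> I \<Longrightarrow> G i \<subseteq> events"
    and AE_eq: "\<And>i A. i \<in> I \<Longrightarrow> A \<in> G i \<Longrightarrow> \<exists>A'\<in>F i. AE x in M. x \<in> A \<longleftrightarrow> x \<in> A'"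
  shows "indep_sets G I"
proof (rule indep_setsI)
  fix A J assume J: "J \<noteq> {}" "J \<subseteq> I" "finite J" and A: "\<forall>j\<in>J. A j \<in> G j"
  then have "\<forall>j\<in>J. \<exists>A'. A' \<in> F j \<and> (AE x in M. x \<in> A j \<longleftrightarrow> x \<in> A')"
    using AE_eq by blast
  then obtain A' where A': "\<And>j. j \<in> J \<Longrightarrow> A' j \<in> F j \<and> (AE x in M. x \<in> A j \<longleftrightarrow> x \<in> A' j)"
    by (metis bchoice)
  have A_events: "A j \<in> events" if "j \<in> J" for j
    using events A J that by blast
  have A'_events: "A' j \<in> events" if "j \<in> J" for j
    using indep A' J that unfolding indep_sets_def by blast
  have "prob (\<Inter>j\<in>J. A j) = prob (\<Inter>j\<in>J. A' j)"
  proof (rule measure_eq_AE)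
    have "AE x in M. \<forall>j\<in>J. x \<in> A j \<longleftrightarrow> x \<in> A' j"
      using A' \<open>finite J\<close> by (simp add: AE_finite_all)
    then show "AE x in M. x \<in> (\<Inter>j\<in>J. A j) \<longleftrightarrow> x \<in> (\<Inter>j\<in>J. A' j)"
      by eventually_elim blast
  qed (use J A_events A'_events in auto)
  also have "\<dots> = (\<Prod>j\<in>J. prob (A' j))"
    using J A' by (intro indep_setsD[OF indep]) auto
  also have "\<dots> = (\<Prod>j\<in>J. prob (A j))"
  proof (rule prod.cong)
    show "prob (A' j) = prob (A j)" if "j \<in> J" for j
      using A' A_events A'_events that by (metis measure_eq_AE)
  qed simp
  finally show "prob (\<Inter>j\<in>J. A j) = (\<Prod>j\<in>J. prob (A j))" .
qed (use events in auto)

lemma (in prob_space) indep_vars_AE_cong: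
  assumes indep: "indep_vars M' Y I"
    and X: "\<And>i. i \<in> I \<Longrightarrow> random_variable (M' i) (X i)"
    and AE_eq: "AE \<omega> in M. \<forall>i\<in>I. X i \<omega> = Y i \<omega>"
  shows "indep_vars M' X I"
  unfolding indep_vars_def2
proof (intro conjI ballI X)
  show "indep_sets (\<lambda>i. {X i -` A \<inter> space M | A. A \<in> sets (M' i)}) I"
  proof (rule indep_sets_AE_cong)
    show "indep_sets (\<lambda>i. {Y i -` A \<inter> space M | A. A \<in> sets (M' i)}) I"
      using indep unfolding indep_vars_def2 by blast
    show "{X i -` A \<inter> space M | A. A \<in> sets (M' i)} \<subseteq> events" if "i \<in> I" for i
      using X[OF that] by (auto intro: measurable_sets)
    fix i B assume "i \<in> I" "B \<in> {X i -` A \<inter> space M | A. A \<in> sets (M' i)}"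
    then obtain A where "A \<in> sets (M' i)" "B = X i -` A \<inter> space M" by blast
    moreover have "AE \<omega> in M. \<omega> \<in> X i -` A \<inter> space M \<longleftrightarrow> \<omega> \<in> Y i -` A \<inter> space M"
      using AE_eq by eventually_elim (use \<open>i \<in> I\<close> in auto)
    ultimately show "\<exists>B'\<in>{Y i -` A \<inter> space M | A. A \<in> sets (M' i)}. AE \<omega> in M. \<omega> \<in> B \<longleftrightarrow> \<omega> \<in> B'"
      by blast
  qed
qed

lemma (in prob_space) indep_vars_of_indep_pairs:
  fixes E :: "'i + 'i \<Rightarrow> 'a set set"
  assumes indep: "indep_sets E (Inl ` I \<union> Inr ` I)"
    and Int_stable: "\<And>i. Int_stable (E i)"
    and Y: "\<And>j. j \<in> I \<Longrightarrow> Y j \<in> measurable (sigma (space M) (E (Inl j) \<union> E (Inr j))) (M' j)"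
  shows "indep_vars M' Y I"
proof -
  let ?F = "\<lambda>j. sigma_sets (space M) (E (Inl j) \<union> E (Inr j))"
  have "(\<Union>j\<in>I. {Inl j, Inr j}) = Inl ` I \<union> Inr ` I" by auto
  then have pairs: "indep_sets ?F I"
    using indep_sets_collect_sigma[of E "\<lambda>j. {Inl j, Inr j}" I] indep Int_stable
    by (simp add: disjoint_family_on_def)
  have F_events: "?F j \<subseteq> events" if "j \<in> I" for j
    using indep that unfolding indep_sets_def by (intro sets.sigma_sets_subset) auto
  have preimages: "{Y j -` A \<inter> space M | A. A \<in> sets (M' j)} \<subseteq> ?F j" if "j \<in> I" for j
  proof -
    have "sets (sigma (space M) (E (Inl j) \<union> E (Inr j))) = ?F j"
      using F_events[OF that] sets.sets_into_space sigma_sets_superset_generator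
      by (intro sets_measure_of) blast
    then show ?thesis
      using measurable_sets[OF Y[OF that]] by (auto simp: space_measure_of_conv)
  qed
  show ?thesis
    unfolding indep_vars_def2
  proof (intro conjI ballI)
    fix j assume j: "j \<in> I"
    show "random_variable (M' j) (Y j)"
      unfolding measurable_def using measurable_space[OF Y[OF j]] preimages[OF j] F_events[OF j]
      by (auto simp: space_measure_of_conv)
  qed (rule indep_sets_mono_sets[OF pairs preimages])
qed

locale poisson_mining = prob_space M
  for M :: "'a measure" and X :: "nat \<Rightarrow> 'a \<Rightarrow> real" and B :: "nat \<Rightarrow> 'a \<Rightarrow> bool"
    and lam \<rho> \<Delta> :: real +
  assumes lam_pos: "0 < lam" and Delta_nonneg: "0 \<le> \<Delta>"
    and X_exponential: "\<And>k. 1 \<le> k \<Longrightarrow> distributed M lborel (X k) (exponential_density lam)"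
    and B_measurable: "\<And>k. 1 \<le> k \<Longrightarrow> B k \<in> measurable M (count_space UNIV)"
    and prob_B: "\<And>k. 1 \<le> k \<Longrightarrow> prob {\<omega> \<in> space M. B k \<omega>} = \<rho>"
    and indep_X_B: "indep_sets
           (\<lambda>i. case i of
                   Inl k \<Rightarrow> sets (vimage_algebra (space M) (X k) borel)
                 | Inr k \<Rightarrow> sets (vimage_algebra (space M) (B k) (count_space UNIV)))
           (Inl ` {1..} \<union> Inr ` {1..})"
begin

definition honest :: "nat \<Rightarrow> 'a \<Rightarrow> bool" where
  "honest j \<omega> \<longleftrightarrow> relabeled_honest (mine_time (\<lambda>k. X k \<omega>)) (\<lambda>k. B k \<omega>) \<Delta> j"

lemma X_measurable: "1 \<le> k \<Longrightarrow> X k \<in> borel_measurable M"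
  using distributed_measurable[OF X_exponential] by (simp add: measurable_cong_sets[OF refl sets_lborel])

lemma AE_interarrival_regular: "AE \<omega> in M. \<forall>k\<ge>1. 0 < X k \<omega> \<and> X k \<omega> \<noteq> \<Delta>"
proof (subst AE_all_countable, intro allI AE_impI AE_conjI)
  fix k :: nat assume k: "1 \<le> k"
  have "\<P>(\<omega> in M. 0 < X k \<omega>) = 1"
    using exponential_distributedD_gt[OF X_exponential[OF k] _ lam_pos, of 0] by simp
  then show "AE \<omega> in M. 0 < X k \<omega>"
    using AE_prob_1 by fastforce
  have "emeasure M (X k -` {\<Delta>} \<inter> space M)
      = (\<integral>\<^sup>+x. ennreal (exponential_density lam x) * indicator {\<Delta>} x \<partial>lborel)"
    by (rule distributed_emeasure[OF X_exponential[OF k]]) simp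
  also have "\<dots> = 0"
    by (subst nn_integral_indicator_singleton) auto
  finally have "X k -` {\<Delta>} \<inter> space M \<in> null_sets M"
    using measurable_sets[OF X_measurable[OF k], of "{\<Delta>}"] by auto
  then show "AE \<omega> in M. X k \<omega> \<noteq> \<Delta>"
    by (rule AE_I') auto
qed

lemma AE_honest_iff: "AE \<omega> in M. \<forall>j\<in>{1..}. honest j \<omega> \<longleftrightarrow> B j \<omega> \<and> \<Delta> < X j \<omega>"
  using AE_interarrival_regular
  by eventually_elim (auto simp: honest_def relabeled_honest_def lagger_mine_time_iff)

lemma honest_measurable: "1 \<le> j \<Longrightarrow> Measurable.pred M (honest j)"
proof -
  assume "1 \<le> j"
  have [measurable]: "(\<lambda>\<omega>. mine_time (\<lambda>k. X k \<omega>) i) \<in> borel_measurable M" for i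
    unfolding mine_time_def by (intro borel_measurable_sum) (auto intro: X_measurable)
  have [measurable]: "Measurable.pred M (B j)"
    using B_measurable[OF \<open>1 \<le> j\<close>] by simp
  show ?thesis
    unfolding honest_def relabeled_honest_def lagger_def by measurable
qed

lemma indep_honest: "indep_vars (\<lambda>_. count_space UNIV) honest {1..}"
proof (rule indep_vars_AE_cong[OF _ _ AE_honest_iff])
  let ?E = "\<lambda>i. case i of
                   Inl k \<Rightarrow> sets (vimage_algebra (space M) (X k) borel)
                 | Inr k \<Rightarrow> sets (vimage_algebra (space M) (B k) (count_space UNIV))"
  show "indep_vars (\<lambda>_. count_space UNIV) (\<lambda>j \<omega>. B j \<omega> \<and> \<Delta> < X j \<omega>) {1..}"
  proof (rule indep_vars_of_indep_pairs[OF indep_X_B])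
    show "Int_stable (?E i)" for i
      by (cases i) (simp_all add: sets.Int_stable)
    fix j :: nat
    let ?S = "sigma (space M) (?E (Inl j) \<union> ?E (Inr j))"
    have gen: "?E (Inl j) \<union> ?E (Inr j) \<subseteq> Pow (space M)"
      using sets.sets_into_space by fastforce
    have "X j -` {\<Delta><..} \<inter> space M \<in> ?E (Inl j) \<union> ?E (Inr j)"
      "B j -` {True} \<inter> space M \<in> ?E (Inl j) \<union> ?E (Inr j)"
      by (simp_all add: in_vimage_algebra)
    then have "X j -` {\<Delta><..} \<inter> space M \<in> sets ?S" "B j -` {True} \<inter> space M \<in> sets ?S"
      using in_measure_of[OF gen] by blast+
    then have "Measurable.pred ?S (\<lambda>\<omega>. \<Delta> < X j \<omega>)" "Measurable.pred ?S (B j)"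
      unfolding pred_def by (simp_all add: space_measure_of_conv vimage_def Int_def conj_commute)
    then show "(\<lambda>\<omega>. B j \<omega> \<and> \<Delta> < X j \<omega>) \<in> measurable ?S (count_space UNIV)"
      by (rule pred_intros_logic(3)[rotated])
  qed
qed (simp add: honest_measurable)

lemma prob_honest:
  assumes "1 \<le> j"
  shows "prob {\<omega> \<in> space M. honest j \<omega>} = \<rho> * exp (- lam * \<Delta>)"
proof -
  let ?SX = "{\<omega> \<in> space M. \<Delta> < X j \<omega>}" and ?SB = "{\<omega> \<in> space M. B j \<omega>}"
  have "?SX = X j -` {\<Delta><..} \<inter> space M" "?SB = B j -` {True} \<inter> space M" by auto
  then have SX: "?SX \<in> sets (vimage_algebra (space M) (X j) borel)"
    and SB: "?SB \<in> sets (vimage_algebra (space M) (B j) (count_space UNIV))"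
    by (simp_all add: in_vimage_algebra)
  have "prob {\<omega> \<in> space M. honest j \<omega>} = prob (?SX \<inter> ?SB)"
    using AE_honest_iff assms honest_measurable[OF assms] X_measurable[OF assms] B_measurable[OF assms]
    by (intro measure_eq_AE) (auto elim!: eventually_mono)
  also have "?SX \<inter> ?SB = (\<Inter>i\<in>{Inl j, Inr j}. if i = Inl j then ?SX else ?SB)" by auto
  also have "prob \<dots> = prob ?SX * prob ?SB"
    using SX SB assms by (subst indep_setsD[OF indep_X_B]) auto
  also have "prob ?SX = exp (- \<Delta> * lam)"
    by (rule exponential_distributedD_gt[OF X_exponential[OF assms] Delta_nonneg lam_pos])
  finally show ?thesis using prob_B[OF assms] by (simp add: mult.commute)
qed

lemma AE_honest_blocks:
  "AE \<omega> in M. \<forall>(Hon :: 'n set) miner parent ht rcv.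
      valid_execution (mine_time (\<lambda>k. X k \<omega>)) (\<lambda>k. B k \<omega>) \<Delta> Hon miner parent ht rcv \<longrightarrow>
      (let t = mine_time (\<lambda>k. X k \<omega>); H = relabeled_honest t (\<lambda>k. B k \<omega>) \<Delta> in
        (\<forall>i j. 1 \<le> i \<longrightarrow> i < j \<longrightarrow> H i \<longrightarrow> H j \<longrightarrow> (\<forall>n\<in>Hon. rcv n i < ereal (t j)))
      \<and> (\<forall>i j. 1 \<le> i \<longrightarrow> 1 \<le> j \<longrightarrow> i \<noteq> j \<longrightarrow> H i \<longrightarrow> H j \<longrightarrow> ht i \<noteq> ht j)
      \<and> (\<forall>\<tau> i j. 1 \<le> i \<longrightarrow> 1 \<le> j \<longrightarrow> H i \<longrightarrow> H j \<longrightarrow> t i \<le> \<tau> \<longrightarrow> \<tau> < t j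
             \<longrightarrow> ht i < ht j))"
  using AE_interarrival_regular
proof eventually_elim
  case (elim \<omega>)
  then show ?case by (intro allI impI valid_execution_honest_blocks) simp_all
qed

end

theorem mainTheorem8:
  fixes M :: "'a measure" and X :: "nat \<Rightarrow> 'a \<Rightarrow> real" and B :: "nat \<Rightarrow> 'a \<Rightarrow> bool"
    and lam \<rho> \<Delta> :: real
  assumes "prob_space M"
    and "lam > 0" and "0 \<le> \<rho>" and "\<rho> \<le> 1" and "\<Delta> \<ge> 0"
    and "\<And>k. k \<ge> 1 \<Longrightarrow> distributed M lborel (X k) (exponential_density lam)"
    and "\<And>k. k \<ge> 1 \<Longrightarrow> B k \<in> measurable M (count_space UNIV)"
    and "\<And>k. k \<ge> 1 \<Longrightarrow> measure M {\<omega> \<in> space M. B k \<omega>} = \<rho>"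
    and "prob_space.indep_sets M
           (\<lambda>i. case i of
                   Inl k \<Rightarrow> sets (vimage_algebra (space M) (X k) borel)
                 | Inr k \<Rightarrow> sets (vimage_algebra (space M) (B k) (count_space UNIV)))
           (Inl ` {1..} \<union> Inr ` {1..})"
  shows "prob_space.indep_vars M (\<lambda>_. count_space UNIV)
           (\<lambda>j \<omega>. relabeled_honest (mine_time (\<lambda>k. X k \<omega>)) (\<lambda>k. B k \<omega>) \<Delta> j) {1..}
       \<and> (\<forall>j\<ge>1. measure M {\<omega> \<in> space M.
              relabeled_honest (mine_time (\<lambda>k. X k \<omega>)) (\<lambda>k. B k \<omega>) \<Delta> j} = \<rho> * exp (- lam * \<Delta>))
       \<and> (AE \<omega> in M. \<forall>(Hon :: 'n set) miner parent ht rcv.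
            valid_execution (mine_time (\<lambda>k. X k \<omega>)) (\<lambda>k. B k \<omega>) \<Delta> Hon miner parent ht rcv \<longrightarrow>
            (let t = mine_time (\<lambda>k. X k \<omega>); H = relabeled_honest t (\<lambda>k. B k \<omega>) \<Delta> in
              (\<forall>i j. 1 \<le> i \<longrightarrow> i < j \<longrightarrow> H i \<longrightarrow> H j \<longrightarrow> (\<forall>n\<in>Hon. rcv n i < ereal (t j)))
            \<and> (\<forall>i j. 1 \<le> i \<longrightarrow> 1 \<le> j \<longrightarrow> i \<noteq> j \<longrightarrow> H i \<longrightarrow> H j \<longrightarrow> ht i \<noteq> ht j)
            \<and> (\<forall>\<tau> i j. 1 \<le> i \<longrightarrow> 1 \<le> j \<longrightarrow> H i \<longrightarrow> H j \<longrightarrow> t i \<le> \<tau> \<longrightarrow> \<tau> < t j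
                   \<longrightarrow> ht i < ht j)))"
proof -
  interpret poisson_mining M X B lam \<rho> \<Delta>
    using assms by (simp add: poisson_mining_def poisson_mining_axioms_def)
  show ?thesis
    using indep_honest prob_honest AE_honest_blocks by (simp add: honest_def[abs_def])
qed

end
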